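(* Let $\mathcal{D}$ be a distribution supported on $(0,1]$ with mean $\mu$. Then for all $n,m$ and every preference profile $\sigma$, every alternative $j^*$ maximizing $\mathbb{E}[\mathrm{sw}(j,u)]$ over $j\in A$ satisfies $\mathbb{E}[\mathrm{sw}(j^*,u)]\ge n\mu$ and $\mathbb{E}[\mathrm{dist}(j^*,\sigma)]\ge\mu$.
   Context: There are $n$ voters and $m$ alternatives $A=\{1,\dots,m\}$. A preference profile $\sigma$ consists of a ranking of $A$ for each voter. Given $\mathcal{D}$ and $\sigma$, a random utility profile $u$ consistent with $\sigma$ is generated as follows: independently for each voter $i$, draw $m$ i.i.d. samples from $\mathcal{D}$ and assign them, from highest to lowest, to the alternatives in the order of voter $i$'s ranking. The social welfare of $j$ is $\mathrm{sw}(j,u)=\sum_i u_{ij}$, and $\mathrm{dist}(j,\sigma)=\mathrm{sw}(j,u)/\max_{k\in A}\mathrm{sw}(k,u)$; expectations are over $u$. *)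

theory Defs
  imports "HOL-Probability.Probability"
begin

text \<open>Voters are 0..n-1, alternatives are 0..m-1 (the paper's A = {1..m}, shifted).
  A sample point x assigns a real to every (voter, slot) pair; the samples of
  voter i are x (i,0), ..., x (i,m-1).\<close>

text \<open>A preference profile: for every voter i, sigma i k is the alternative
  that voter i ranks at position k (position 0 = top).\<close>
definition is_profile :: "nat \<Rightarrow> nat \<Rightarrow> (nat \<Rightarrow> nat \<Rightarrow> nat) \<Rightarrow> bool" where
  "is_profile n m \<sigma> = (\<forall>i<n. bij_betw (\<sigma> i) {..<m} {..<m})"

definition kth_largest :: "(nat \<Rightarrow> real) \<Rightarrow> nat \<Rightarrow> nat \<Rightarrow> real" where
  "kth_largest s m k = rev (sort (map s [0..<m])) ! k"

text \<open>Utility of alternative j for voter i: the samples of voter i, sorted from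
  highest to lowest, are assigned in the order of voter i's ranking.\<close>
definition util :: "nat \<Rightarrow> (nat \<Rightarrow> nat \<Rightarrow> nat) \<Rightarrow> (nat \<times> nat \<Rightarrow> real) \<Rightarrow> nat \<Rightarrow> nat \<Rightarrow> real" where
  "util m \<sigma> x i j = kth_largest (\<lambda>l. x (i, l)) m (inv_into {..<m} (\<sigma> i) j)"

definition sw :: "nat \<Rightarrow> nat \<Rightarrow> (nat \<Rightarrow> nat \<Rightarrow> nat) \<Rightarrow> (nat \<times> nat \<Rightarrow> real) \<Rightarrow> nat \<Rightarrow> real" where
  "sw n m \<sigma> x j = (\<Sum>i<n. util m \<sigma> x i j)"

definition distortion :: "nat \<Rightarrow> nat \<Rightarrow> (nat \<Rightarrow> nat \<Rightarrow> nat) \<Rightarrow> (nat \<times> nat \<Rightarrow> real) \<Rightarrow> nat \<Rightarrow> real" where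
  "distortion n m \<sigma> x j = sw n m \<sigma> x j / Max ((\<lambda>k. sw n m \<sigma> x k) ` {..<m})"

definition sample_space :: "real measure \<Rightarrow> nat \<Rightarrow> nat \<Rightarrow> (nat \<times> nat \<Rightarrow> real) measure" where
  "sample_space D n m = PiM ({..<n} \<times> {..<m}) (\<lambda>_. D)"

end

theory Submission
  imports Defs
begin

text \<open>Each voter's utilities are a permutation of that voter's samples, so the social
  welfares of all alternatives add up to the sum of all n m samples, whose expectation is
  n m \<mu>. The alternative of maximal expected welfare is at least as good as the average,
  i.e. its expected welfare is at least n \<mu>. Since all samples lie in (0,1], every
  welfare is at most n, so the distortion of any alternative is at least its welfare
  divided by n, and taking expectations gives the bound \<mu> on the expected distortion.\<close>

lemma nth_insort:
  fixes a :: "'a::linorder"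
  assumes "sorted xs" "xs \<noteq> []" "k \<le> length xs"
  shows "insort a xs ! k =
    (if k = 0 then min a (xs ! 0)
     else if k = length xs then max a (xs ! (k - 1))
     else max (xs ! (k - 1)) (min a (xs ! k)))"
  using assms
proof (induction xs arbitrary: k)
  case Nil
  then show ?case by simp
next
  case (Cons x xs)
  show ?case
  proof (cases "a \<le> x")
    case True
    then have "\<forall>y\<in>set (x # xs). a \<le> y" using Cons.prems(1) by auto
    show ?thesis
    proof (cases k)
      case (Suc k')
      then have "k' > 0 \<Longrightarrow> a \<le> xs ! (k' - 1)"
        using \<open>\<forall>y\<in>set (x # xs). a \<le> y\<close> Cons.prems(3) by simp
      then show ?thesis
        using True Cons.prems Suc by (auto simp: min_def max_def nth_Cons' split: if_splits)
    qed (simp add: True)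
  next
    case False
    show ?thesis
    proof (cases "xs = [] \<or> k = 0")
      case True
      then show ?thesis using False Cons.prems by (cases k) (auto simp: min_def max_def)
    next
      case False
      then obtain k' where k: "k = Suc k'" and "xs \<noteq> []" by (cases k) auto
      moreover have "x \<le> xs ! 0" using Cons.prems(1) \<open>xs \<noteq> []\<close> by auto
      ultimately show ?thesis
        using Cons.IH[of k'] Cons.prems \<open>\<not> a \<le> x\<close> by (auto simp: min_def max_def)
    qed
  qed
qed

lemma borel_measurable_sort_nth:
  fixes fs :: "('a \<Rightarrow> 'b::{second_countable_topology, linorder_topology}) list"
  assumes "\<And>f. f \<in> set fs \<Longrightarrow> f \<in> borel_measurable M" "k < length fs"
  shows "(\<lambda>x. sort (map (\<lambda>f. f x) fs) ! k) \<in> borel_measurable M"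
  using assms
proof (induction fs arbitrary: k)
  case Nil
  then show ?case by simp
next
  case (Cons g fs)
  show ?case
  proof (cases "fs = []")
    case True
    then show ?thesis using Cons.prems by simp
  next
    case False
    let ?S = "\<lambda>x. sort (map (\<lambda>f. f x) fs)"
    have IH: "(\<lambda>x. ?S x ! i) \<in> borel_measurable M" if "i < length fs" for i
      using Cons.IH[of i] Cons.prems that by auto
    have "?S x \<noteq> []" for x
      using False by (metis length_map length_sort length_0_conv)
    then have "sort (map (\<lambda>f. f x) (g # fs)) ! k =
        (if k = 0 then min (g x) (?S x ! 0)
         else if k = length fs then max (g x) (?S x ! (k - 1))
         else max (?S x ! (k - 1)) (min (g x) (?S x ! k)))" for x
      using nth_insort[OF sorted_sort, of _ k "g x"] Cons.prems by simp
    moreover have "g \<in> borel_measurable M" using Cons.prems by simp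
    ultimately show ?thesis
      using False Cons.prems IH
      by (cases "k = 0"; cases "k = length fs"; simp; intro borel_measurable_max borel_measurable_min; simp)
  qed
qed

lemma kth_largest_conv_sort_nth:
  "k < m \<Longrightarrow> kth_largest s m k = sort (map s [0..<m]) ! (m - Suc k)"
  unfolding kth_largest_def by (simp add: rev_nth)

lemma borel_measurable_kth_largest:
  fixes s :: "nat \<Rightarrow> 'a \<Rightarrow> real"
  assumes "k < m" "\<And>l. l < m \<Longrightarrow> s l \<in> borel_measurable M"
  shows "(\<lambda>x. kth_largest (\<lambda>l. s l x) m k) \<in> borel_measurable M"
proof -
  have "(\<lambda>x. sort (map (\<lambda>f. f x) (map s [0..<m])) ! (m - Suc k)) \<in> borel_measurable M"
    by (rule borel_measurable_sort_nth) (use assms in auto)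
  then show ?thesis using assms(1) by (simp add: kth_largest_conv_sort_nth comp_def)
qed

lemma kth_largest_in_image: "k < m \<Longrightarrow> kth_largest s m k \<in> s ` {..<m}"
  using nth_mem[of "m - Suc k" "sort (map s [0..<m])"]
  by (auto simp: kth_largest_conv_sort_nth)

lemma sum_kth_largest: "(\<Sum>k<m. kth_largest s m k) = (\<Sum>l<m. s l)"
proof -
  have "(\<Sum>k<m. kth_largest s m k) = sum_list (rev (sort (map s [0..<m])))"
    by (simp add: kth_largest_def sum_list_sum_nth atLeast0LessThan)
  also have "\<dots> = sum_list (map s [0..<m])"
    by (metis mset_rev mset_sort sum_mset_sum_list)
  also have "\<dots> = (\<Sum>l<m. s l)"
    by (simp add: sum_list_sum_nth atLeast0LessThan)
  finally show ?thesis .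
qed

definition samples_in_unit :: "nat \<Rightarrow> nat \<Rightarrow> (nat \<times> nat \<Rightarrow> real) \<Rightarrow> bool" where
  "samples_in_unit n m x \<longleftrightarrow> (\<forall>i<n. \<forall>l<m. 0 < x (i, l) \<and> x (i, l) \<le> 1)"

lemma is_profile_rank_bij:
  "is_profile n m \<sigma> \<Longrightarrow> i < n \<Longrightarrow> bij_betw (inv_into {..<m} (\<sigma> i)) {..<m} {..<m}"
  unfolding is_profile_def by (simp add: bij_betw_inv_into)

lemma is_profile_rank_less:
  "is_profile n m \<sigma> \<Longrightarrow> i < n \<Longrightarrow> j < m \<Longrightarrow> inv_into {..<m} (\<sigma> i) j < m"
  using is_profile_rank_bij by (fastforce simp: bij_betw_def)

lemma util_in_samples:
  assumes "is_profile n m \<sigma>" "i < n" "j < m"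
  shows "util m \<sigma> x i j \<in> (\<lambda>l. x (i, l)) ` {..<m}"
  unfolding util_def using is_profile_rank_less[OF assms] by (rule kth_largest_in_image)

lemma sum_util:
  assumes "is_profile n m \<sigma>" "i < n"
  shows "(\<Sum>j<m. util m \<sigma> x i j) = (\<Sum>l<m. x (i, l))"
proof -
  have "(\<Sum>j<m. util m \<sigma> x i j) = (\<Sum>k<m. kth_largest (\<lambda>l. x (i, l)) m k)"
    unfolding util_def using is_profile_rank_bij[OF assms] by (rule sum.reindex_bij_betw)
  then show ?thesis by (simp add: sum_kth_largest)
qed

lemma sum_sw:
  assumes "is_profile n m \<sigma>"
  shows "(\<Sum>j<m. sw n m \<sigma> x j) = (\<Sum>i<n. \<Sum>l<m. x (i, l))"
proof -
  have "(\<Sum>j<m. sw n m \<sigma> x j) = (\<Sum>i<n. \<Sum>j<m. util m \<sigma> x i j)"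
    unfolding sw_def by (rule sum.swap)
  also have "\<dots> = (\<Sum>i<n. \<Sum>l<m. x (i, l))"
    using sum_util[OF assms] by simp
  finally show ?thesis .
qed

lemma sw_bounds:
  assumes "is_profile n m \<sigma>" "n \<ge> 1" "j < m"
    and unit: "samples_in_unit n m x"
  shows "0 < sw n m \<sigma> x j \<and> sw n m \<sigma> x j \<le> real n"
proof -
  have "0 < util m \<sigma> x i j \<and> util m \<sigma> x i j \<le> 1" if "i < n" for i
    using util_in_samples[OF assms(1) that assms(3), of x] unit that
    by (force simp: samples_in_unit_def)
  then have "0 < (\<Sum>i<n. util m \<sigma> x i j)" and "(\<Sum>i<n. util m \<sigma> x i j) \<le> (\<Sum>i<n. 1)"
    using assms(2) by (auto simp: lessThan_empty_iff intro: sum_pos sum_mono simp del: sum_constant)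
  then show ?thesis unfolding sw_def by simp
qed

lemma distortion_bounds:
  assumes "is_profile n m \<sigma>" "n \<ge> 1" "j < m"
    and unit: "samples_in_unit n m x"
  shows "sw n m \<sigma> x j / real n \<le> distortion n m \<sigma> x j \<and> distortion n m \<sigma> x j \<le> 1"
proof -
  let ?Max = "Max ((\<lambda>k. sw n m \<sigma> x k) ` {..<m})"
  have sw_j: "0 < sw n m \<sigma> x j" using sw_bounds[OF assms] by simp
  have "sw n m \<sigma> x j \<le> ?Max" using assms(3) by (intro Max_ge) auto
  moreover have "?Max \<le> real n"
    using assms(3) sw_bounds[OF assms(1,2) _ unit] by (subst Max_le_iff) auto
  ultimately show ?thesis
    using sw_j unfolding distortion_def by (auto intro: divide_left_mono)
qed

lemma borel_measurable_util:
  assumes "is_profile n m \<sigma>" "i < n" "j < m"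
    and "\<And>l. l < m \<Longrightarrow> (\<lambda>x. x (i, l)) \<in> borel_measurable M"
  shows "(\<lambda>x. util m \<sigma> x i j) \<in> borel_measurable M"
  unfolding util_def using is_profile_rank_less[OF assms(1-3)]
  by (rule borel_measurable_kth_largest) (use assms(4) in auto)

lemma borel_measurable_sw:
  assumes "is_profile n m \<sigma>" "j < m"
    and "\<And>p. p \<in> {..<n} \<times> {..<m} \<Longrightarrow> (\<lambda>x. x p) \<in> borel_measurable M"
  shows "(\<lambda>x. sw n m \<sigma> x j) \<in> borel_measurable M"
  unfolding sw_def using assms by (auto intro!: borel_measurable_sum borel_measurable_util)

lemma borel_measurable_distortion:
  assumes "is_profile n m \<sigma>" "j < m"
    and "\<And>p. p \<in> {..<n} \<times> {..<m} \<Longrightarrow> (\<lambda>x. x p) \<in> borel_measurable M"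
  shows "(\<lambda>x. distortion n m \<sigma> x j) \<in> borel_measurable M"
  unfolding distortion_def using assms
  by (intro borel_measurable_divide borel_measurable_Max borel_measurable_sw) auto

locale unit_support_distribution = prob_space D for D :: "real measure" +
  assumes sets_eq_borel: "sets D = sets borel"
    and AE_unit: "AE y in D. 0 < y \<and> y \<le> 1"
begin

lemma prob_space_sample_space: "prob_space (sample_space D n m)"
  unfolding sample_space_def by (rule prob_space_PiM) (simp add: prob_space_axioms)

lemma borel_measurable_sample:
  "p \<in> {..<n} \<times> {..<m} \<Longrightarrow> (\<lambda>x. x p) \<in> borel_measurable (sample_space D n m)"
  using measurable_component_singleton[of p _ "\<lambda>_. D"]
  unfolding sample_space_def measurable_cong_sets[OF refl sets_eq_borel] .

lemma AE_samples_unit: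
  "AE x in sample_space D n m. samples_in_unit n m x"
proof -
  have "AE x in sample_space D n m. \<forall>p\<in>{..<n} \<times> {..<m}. 0 < x p \<and> x p \<le> 1"
    unfolding sample_space_def
    by (intro eventually_ball_finite ballI AE_PiM_component) (use prob_space_axioms AE_unit in auto)
  then show ?thesis
    by (rule eventually_mono) (simp add: samples_in_unit_def)
qed

lemma integrable_sample_space_const_bound:
  fixes f :: "(nat \<times> nat \<Rightarrow> real) \<Rightarrow> real" and B :: real
  assumes "f \<in> borel_measurable (sample_space D n m)"
    and "\<And>x. samples_in_unit n m x \<Longrightarrow> \<bar>f x\<bar> \<le> B"
  shows "integrable (sample_space D n m) f"
proof -
  interpret S: prob_space "sample_space D n m" by (rule prob_space_sample_space)
  show ?thesis
  proof (rule S.integrable_const_bound[where B = B])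
    show "AE x in sample_space D n m. norm (f x) \<le> B"
      using AE_samples_unit by eventually_elim (use assms(2) in auto)
  qed (rule assms(1))
qed

lemma integrable_sample:
  assumes "p \<in> {..<n} \<times> {..<m}"
  shows "integrable (sample_space D n m) (\<lambda>x. x p)"
proof (rule integrable_sample_space_const_bound[where B = 1])
  show "\<bar>x p\<bar> \<le> 1" if "samples_in_unit n m x" for x
    using that assms unfolding samples_in_unit_def by force
qed (rule borel_measurable_sample[OF assms])

lemma integral_sample:
  assumes "p \<in> {..<n} \<times> {..<m}"
  shows "(\<integral>x. x p \<partial>sample_space D n m) = (\<integral>y. y \<partial>D)"
proof -
  have "(\<integral>x. x p \<partial>sample_space D n m) = (\<integral>y. y \<partial>distr (sample_space D n m) D (\<lambda>x. x p))"
    using borel_measurable_sample[OF assms]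
    by (intro integral_distr[symmetric])
       (auto simp: measurable_cong_sets[OF refl sets_eq_borel] measurable_ident_sets[OF sets_eq_borel])
  also have "distr (sample_space D n m) D (\<lambda>x. x p) = D"
    unfolding sample_space_def by (rule distr_PiM_component[OF prob_space_axioms assms])
  finally show ?thesis .
qed

lemma integrable_sw:
  assumes "is_profile n m \<sigma>" "n \<ge> 1" "j < m"
  shows "integrable (sample_space D n m) (\<lambda>x. sw n m \<sigma> x j)"
  using sw_bounds[OF assms]
  by (intro integrable_sample_space_const_bound[where B = "real n"] borel_measurable_sw[OF assms(1,3)]
        borel_measurable_sample)
     (fastforce simp: abs_le_iff)+

lemma expected_distortion_ge:
  assumes "is_profile n m \<sigma>" "n \<ge> 1" "j < m"
  shows "(\<integral>x. sw n m \<sigma> x j \<partial>sample_space D n m) / real n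
         \<le> (\<integral>x. distortion n m \<sigma> x j \<partial>sample_space D n m)"
proof -
  have "\<bar>distortion n m \<sigma> x j\<bar> \<le> 1" if "samples_in_unit n m x" for x
    using distortion_bounds[OF assms that] sw_bounds[OF assms that]
    by (smt (verit) divide_nonneg_nonneg of_nat_0_le_iff)
  then have "integrable (sample_space D n m) (\<lambda>x. distortion n m \<sigma> x j)"
    by (intro integrable_sample_space_const_bound[where B = 1] borel_measurable_distortion[OF assms(1,3)]
          borel_measurable_sample)
  then have "(\<integral>x. sw n m \<sigma> x j / real n \<partial>sample_space D n m)
             \<le> (\<integral>x. distortion n m \<sigma> x j \<partial>sample_space D n m)"
    using integrable_sw[OF assms] AE_samples_unit[of n m]
    by (intro integral_mono_AE) (auto elim!: eventually_mono dest: distortion_bounds[OF assms])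
  then show ?thesis by simp
qed

lemma sum_expected_sw:
  assumes "is_profile n m \<sigma>" "n \<ge> 1"
  shows "(\<Sum>j<m. \<integral>x. sw n m \<sigma> x j \<partial>sample_space D n m) = real m * (real n * (\<integral>y. y \<partial>D))"
proof -
  let ?S = "sample_space D n m"
  have sample: "integrable ?S (\<lambda>x. x (i, l))" if "i < n" "l < m" for i l
    using that by (intro integrable_sample) auto
  have "(\<Sum>j<m. \<integral>x. sw n m \<sigma> x j \<partial>?S) = (\<integral>x. (\<Sum>j<m. sw n m \<sigma> x j) \<partial>?S)"
    using Bochner_Integration.integral_sum[of "{..<m}" ?S "\<lambda>j x. sw n m \<sigma> x j"]
      integrable_sw[OF assms] by simp
  also have "\<dots> = (\<integral>x. (\<Sum>i<n. \<Sum>l<m. x (i, l)) \<partial>?S)"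
    by (simp add: sum_sw[OF assms(1)])
  also have "\<dots> = (\<Sum>i<n. \<integral>x. (\<Sum>l<m. x (i, l)) \<partial>?S)"
    using sample by (intro Bochner_Integration.integral_sum integrable_sum) auto
  also have "\<dots> = (\<Sum>i<n. \<Sum>l<m. \<integral>x. x (i, l) \<partial>?S)"
    using sample by (intro sum.cong refl Bochner_Integration.integral_sum) auto
  also have "\<dots> = (\<Sum>i<n. \<Sum>l<m. \<integral>y. y \<partial>D)"
    by (simp add: integral_sample)
  finally show ?thesis by simp
qed

end

theorem lemma5:
  fixes D :: "real measure" and n m :: nat and \<sigma> :: "nat \<Rightarrow> nat \<Rightarrow> nat" and jstar :: nat
  assumes "prob_space D"
    and "sets D = sets borel"
    and "AE x in D. 0 < x \<and> x \<le> 1"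
    and "n \<ge> 1"
    and "is_profile n m \<sigma>"
    and "jstar < m"
    and "\<forall>j<m. (\<integral>x. sw n m \<sigma> x j \<partial>sample_space D n m)
                 \<le> (\<integral>x. sw n m \<sigma> x jstar \<partial>sample_space D n m)"
  shows "(\<integral>x. sw n m \<sigma> x jstar \<partial>sample_space D n m) \<ge> real n * (\<integral>y. y \<partial>D)
       \<and> (\<integral>x. distortion n m \<sigma> x jstar \<partial>sample_space D n m) \<ge> (\<integral>y. y \<partial>D)"
proof -
  interpret unit_support_distribution D
    using assms(1-3) by (simp add: unit_support_distribution_def unit_support_distribution_axioms_def)
  let ?S = "sample_space D n m" and ?\<mu> = "\<integral>y. y \<partial>D"
  have "real m * (real n * ?\<mu>) \<le> (\<Sum>j<m. \<integral>x. sw n m \<sigma> x jstar \<partial>?S)"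
    unfolding sum_expected_sw[OF assms(5,4), symmetric] using assms(7) by (intro sum_mono) auto
  then have sw_bound: "real n * ?\<mu> \<le> (\<integral>x. sw n m \<sigma> x jstar \<partial>?S)"
    using assms(6) by simp
  then have "?\<mu> \<le> (\<integral>x. sw n m \<sigma> x jstar \<partial>?S) / real n"
    using assms(4) by (simp add: pos_le_divide_eq mult.commute)
  also have "\<dots> \<le> (\<integral>x. distortion n m \<sigma> x jstar \<partial>?S)"
    using expected_distortion_ge[OF assms(5,4,6)] .
  finally show ?thesis using sw_bound by simp
qed

end
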